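(* Fix a measurable set $\mathcal{S}\subset\mathbb{R}_{\geq 0}$ with positive Lebesgue measure. Consider the model in which $\mu\sim G$ for a probability distribution $G$ on $\mathbb{R}$, $|Z|\mid\mu\sim|\mathrm{N}(\mu,1)|$, and $D\mid(|Z|,\mu)\sim\mathrm{Bernoulli}(\pi(|Z|))$ for a measurable $\pi:\mathbb{R}_{\ge0}\to[0,1]$, and suppose that the conditional distribution of $|Z|$ given $\{|Z|\in\mathcal{S},D=1\}$ equals the conditional distribution of $|Z|$ given $\{|Z|\in\mathcal{S}\}$. Then $\mathrm{Fold}[G]$ (equivalently $\mathrm{Symm}[G]$) is identified from the distribution of the observed absolute z-scores, i.e. from the conditional law of $|Z|$ given $D=1$: if $(G,\pi)$ and $(H,\pi')$ both satisfy these assumptions (with the same $\mathcal{S}$) and induce the same conditional law of $|Z|$ given $D=1$, then $\mathrm{Fold}[G]=\mathrm{Fold}[H]$.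
   Context: $|\mathrm{N}(\mu,1)|$ is the folded normal distribution (law of $|X|$, $X\sim \mathrm{N}(\mu,1)$). For a distribution $G$ on $\mathbb{R}$, the symmetrized distribution is $\mathrm{Symm}[G](A)=\{G(A)+G(-A)\}/2$ for Borel $A$, and the folded distribution $\mathrm{Fold}[G]$ is the distribution on $[0,\infty)$ with $\mathrm{Fold}[G](A)=G(A)+G(-A)$ for Borel $A\subset[0,\infty)$ and $\mathrm{Fold}[G]((-\infty,0))=0$; i.e. $\mathrm{Fold}[G]$ is the law of $|\mu|$ for $\mu\sim G$. Only $|Z|$ with $D=1$ is observed. *)

theory Defs
  imports "HOL-Probability.Probability"
begin

definition fnorm_dens :: "real \<Rightarrow> real \<Rightarrow> real" where
  "fnorm_dens mu z = (if 0 \<le> z then normal_density mu 1 z + normal_density mu 1 (- z) else 0)"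

text \<open>Joint law of (mu, |Z|, D): mu ~ G, |Z| | mu ~ |N(mu,1)|, D | (|Z|,mu) ~ Bernoulli(pi |Z|).\<close>
definition model :: "real measure \<Rightarrow> (real \<Rightarrow> real) \<Rightarrow> (real \<times> real \<times> bool) measure" where
  "model G p = density (G \<Otimes>\<^sub>M (lborel \<Otimes>\<^sub>M count_space UNIV))
     (\<lambda>(mu, z, d). ennreal (fnorm_dens mu z * (if d then p z else 1 - p z)))"

definition cond_law_absZ :: "(real \<times> real \<times> bool) measure \<Rightarrow> (real \<times> real \<times> bool) set \<Rightarrow> real set \<Rightarrow> real" where
  "cond_law_absZ M E A = measure M ({(mu, z, d). z \<in> A} \<inter> E) / measure M E"

definition ev_S_D :: "real set \<Rightarrow> (real \<times> real \<times> bool) set" where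
  "ev_S_D S = {(mu, z, d). z \<in> S \<and> d}"

definition ev_S :: "real set \<Rightarrow> (real \<times> real \<times> bool) set" where
  "ev_S S = {(mu, z, d). z \<in> S}"

definition ev_D :: "(real \<times> real \<times> bool) set" where
  "ev_D = {(mu, z, d). d}"

definition selection_ok :: "real set \<Rightarrow> (real \<times> real \<times> bool) measure \<Rightarrow> bool" where
  "selection_ok S M \<longleftrightarrow> measure M (ev_S_D S) > 0 \<and> measure M (ev_S S) > 0 \<and>
     (\<forall>A \<in> sets borel. cond_law_absZ M (ev_S_D S) A = cond_law_absZ M (ev_S S) A)"

definition pub_prob :: "(real \<Rightarrow> real) \<Rightarrow> bool" where
  "pub_prob p \<longleftrightarrow> p \<in> borel_measurable (restrict_space borel {0..}) \<and> (\<forall>z\<ge>0. 0 \<le> p z \<and> p z \<le> 1)"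

definition Fold :: "real measure \<Rightarrow> real measure" where
  "Fold G = distr G borel abs"

end

theory Submission
  imports Defs "HOL-Complex_Analysis.Complex_Analysis"
begin

text \<open>
  Under the selection assumption, the law of \<open>|Z|\<close> given \<open>D = 1\<close>, restricted to \<open>S\<close>, is a
  constant multiple of the restriction to \<open>S\<close> of the marginal density
  \<open>f\<^sub>G(z) = \<integral> fnorm_dens \<mu> z dG(\<mu>)\<close> of \<open>|Z|\<close>. Equal observed laws therefore give
  \<open>\<kappa>\<^sub>G f\<^sub>G = \<kappa>\<^sub>H f\<^sub>H\<close> almost everywhere on \<open>S\<close>, hence on a set with a limit point.
  For \<open>z \<ge> 0\<close> one has \<open>f\<^sub>G(z) = \<phi>(z) (M\<^sub>G(z) + M\<^sub>G(-z))\<close> with the entire function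
  \<open>M\<^sub>G(w) = \<integral> e\<^bsup>-\<mu>\<^sup>2/2\<^esup> e\<^bsup>w\<mu>\<^esup> dG(\<mu>)\<close>, so by the identity theorem the proportionality holds for
  all complex \<open>w\<close>. On the imaginary axis it says that the symmetrizations of the
  Gaussian-tilted priors \<open>e\<^bsup>-\<mu>\<^sup>2/2\<^esup> dG / const\<close> and \<open>e\<^bsup>-\<mu>\<^sup>2/2\<^esup> dH / const\<close> have the same
  characteristic function. Levy's uniqueness theorem, folding and removing the tilt give
  \<open>Fold G = Fold H\<close>.
\<close>

lemma nn_integral_pair_count_space_bool:
  assumes "(\<lambda>(x, d). f x d) \<in> borel_measurable (M \<Otimes>\<^sub>M count_space UNIV)"
  shows "(\<integral>\<^sup>+(x, d). f x d \<partial>(M \<Otimes>\<^sub>M count_space (UNIV :: bool set))) = (\<integral>\<^sup>+x. (\<Sum>d\<in>UNIV. f x d) \<partial>M)"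
proof -
  interpret sigma_finite_measure "count_space (UNIV :: bool set)"
    by (rule sigma_finite_measure_count_space_finite) simp
  show ?thesis
    using assms by (simp add: nn_integral_fst[symmetric] nn_integral_count_space_finite)
qed

lemma emeasure_density_scaled_restrict:
  assumes [measurable]: "f \<in> borel_measurable M" "S \<in> sets M" "A \<in> sets M" and "0 \<le> c"
  shows "emeasure (density M (\<lambda>x. ennreal (c * f x * indicator S x))) A =
    ennreal c * emeasure (density M f) (A \<inter> S)"
proof -
  have "emeasure (density M (\<lambda>x. ennreal (c * f x * indicator S x))) A =
      (\<integral>\<^sup>+x. ennreal c * (ennreal (f x) * indicator (A \<inter> S) x) \<partial>M)"
    using \<open>0 \<le> c\<close> by (auto simp: emeasure_density ennreal_mult' intro!: nn_integral_cong
        split: split_indicator)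
  also have "\<dots> = ennreal c * emeasure (density M f) (A \<inter> S)"
    by (simp add: nn_integral_cmult emeasure_density)
  finally show ?thesis .
qed

lemma density_density_inverse:
  assumes [measurable]: "f \<in> borel_measurable M" and "\<And>x. 0 < f x"
  shows "density (density M (\<lambda>x. ennreal (f x))) (\<lambda>x. ennreal (1 / f x)) = M"
proof -
  have "f x \<noteq> 0" for x
    using assms(2)[of x] by simp
  then show ?thesis
    using assms(2) by (simp add: density_density_eq less_imp_le density_1 flip: ennreal_mult)
qed

lemma ex_islimpt_if_emeasure_pos:
  fixes T :: "real set"
  assumes "0 < emeasure lborel T"
  shows "\<exists>\<xi>. \<xi> islimpt T"
proof (rule ccontr)
  assume "\<nexists>\<xi>. \<xi> islimpt T"
  then have "T \<in> null_sets lborel"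
    by (intro countable_imp_null_set_lborel no_limpt_imp_countable) blast
  with assms show False
    by auto
qed

lemma AE_on_set_obtain_islimpt:
  fixes S :: "real set"
  assumes "S \<in> sets borel" "0 < emeasure lborel S" "AE z in lborel. z \<in> S \<longrightarrow> P z"
  obtains T \<xi> where "T \<subseteq> S" "\<And>z. z \<in> T \<Longrightarrow> P z" "\<xi> islimpt T"
proof -
  obtain N where N: "\<And>z. z \<in> space lborel - N \<Longrightarrow> z \<in> S \<longrightarrow> P z" "N \<in> null_sets lborel"
    using AE_E3[OF assms(3)] by blast
  have "emeasure lborel (S - N) = emeasure lborel S"
    using N(2) assms(1) by (intro emeasure_Diff_null_set) auto
  then have "\<exists>\<xi>. \<xi> islimpt (S - N)"
    using assms(2) by (intro ex_islimpt_if_emeasure_pos) simp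
  then obtain \<xi> where "\<xi> islimpt (S - N)" ..
  then show ?thesis
    using N(1) by (intro that[of "S - N" \<xi>]) auto
qed

section \<open>The folded normal density and the marginal density of |Z|\<close>

definition gauss_wt :: "real \<Rightarrow> real" where
  "gauss_wt mu = exp (- (mu\<^sup>2) / 2)"

lemma gauss_wt_pos: "0 < gauss_wt mu"
  by (simp add: gauss_wt_def)

lemma borel_measurable_gauss_wt [measurable]: "gauss_wt \<in> borel_measurable borel"
  unfolding gauss_wt_def by measurable

definition mix_dens :: "real measure \<Rightarrow> real \<Rightarrow> real" where
  "mix_dens G z = (\<integral>mu. fnorm_dens mu z \<partial>G)"

lemma borel_measurable_fnorm_dens [measurable (raw)]:
  assumes [measurable]: "f \<in> borel_measurable M" "g \<in> borel_measurable M"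
  shows "(\<lambda>x. fnorm_dens (f x) (g x)) \<in> borel_measurable M"
  unfolding fnorm_dens_def normal_density_def by measurable

lemma fnorm_dens_nonneg: "0 \<le> fnorm_dens mu z"
  by (simp add: fnorm_dens_def)

lemma fnorm_dens_neg: "z < 0 \<Longrightarrow> fnorm_dens mu z = 0"
  by (simp add: fnorm_dens_def)

lemma normal_density_le_1: "normal_density mu 1 z \<le> 1"
proof -
  have "1 \<le> sqrt (2 * pi)" using pi_gt3 by simp
  then show ?thesis
    by (simp add: normal_density_def divide_le_eq order_trans[OF _ \<open>1 \<le> sqrt (2 * pi)\<close>])
qed

lemma fnorm_dens_le_2: "fnorm_dens mu z \<le> 2"
  using normal_density_le_1[of mu z] normal_density_le_1[of mu "- z"]
  by (simp add: fnorm_dens_def)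

lemma fnorm_dens_factor:
  assumes "0 \<le> z"
  shows "fnorm_dens mu z = std_normal_density z * (gauss_wt mu * (exp (z * mu) + exp (- (z * mu))))"
proof -
  have e: "exp (- ((s - mu)\<^sup>2 / 2)) = exp (s * mu) * exp (- (mu\<^sup>2 / 2)) * exp (- (s\<^sup>2 / 2))" for s
    unfolding mult_exp_exp by (simp add: power2_eq_square field_simps)
  show ?thesis
    using assms by (simp add: fnorm_dens_def normal_density_def gauss_wt_def e algebra_simps)
qed

lemma normal_density_uminus: "normal_density mu 1 (- z) = normal_density (- mu) 1 z"
  by (simp add: normal_density_def power2_commute add.commute)

lemma nn_integral_fnorm_dens_le: "(\<integral>\<^sup>+z. fnorm_dens mu z \<partial>lborel) \<le> 2"
proof -
  have "(\<integral>\<^sup>+z. fnorm_dens mu z \<partial>lborel) \<le>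
      (\<integral>\<^sup>+z. ennreal (normal_density mu 1 z) + ennreal (normal_density (- mu) 1 z) \<partial>lborel)"
    by (intro nn_integral_mono)
       (simp add: fnorm_dens_def normal_density_uminus flip: ennreal_plus)
  also have "\<dots> = 2"
    by (simp add: nn_integral_add nn_integral_eq_integral one_add_one)
  finally show ?thesis .
qed

lemma mix_dens_nonneg: "0 \<le> mix_dens G z"
  unfolding mix_dens_def by (rule integral_nonneg_AE) (simp add: fnorm_dens_nonneg)

context
  fixes G :: "real measure"
  assumes G: "prob_space G" and sets_G [measurable_cong]: "sets G = sets borel"
begin

interpretation G: prob_space G by (rule G)

lemma integrable_fnorm_dens: "integrable G (\<lambda>mu. fnorm_dens mu z)"
  by (rule G.integrable_const_bound[where B=2]) (auto simp: fnorm_dens_nonneg fnorm_dens_le_2)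

lemma borel_measurable_mix_dens [measurable]: "mix_dens G \<in> borel_measurable borel"
  unfolding mix_dens_def by measurable

lemma nn_integral_fnorm_dens_mult:
  assumes "0 \<le> c"
  shows "(\<integral>\<^sup>+mu. ennreal (fnorm_dens mu z * c) \<partial>G) = ennreal (mix_dens G z * c)"
  unfolding mix_dens_def using assms integrable_fnorm_dens[of z]
  by (subst nn_integral_eq_integral) (auto simp: fnorm_dens_nonneg)

lemma nn_integral_mix_dens_le: "(\<integral>\<^sup>+z. mix_dens G z \<partial>lborel) \<le> 2"
proof -
  interpret pair_sigma_finite G lborel
    by (intro pair_sigma_finite.intro G.sigma_finite_measure_axioms lborel.sigma_finite_measure_axioms)
  have "(\<integral>\<^sup>+z. mix_dens G z \<partial>lborel) = (\<integral>\<^sup>+z. \<integral>\<^sup>+mu. fnorm_dens mu z \<partial>G \<partial>lborel)"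
    using nn_integral_fnorm_dens_mult[of 1] by simp
  also have "\<dots> = (\<integral>\<^sup>+mu. \<integral>\<^sup>+z. fnorm_dens mu z \<partial>lborel \<partial>G)"
    by (rule Fubini') measurable
  also have "\<dots> \<le> (\<integral>\<^sup>+mu. 2 \<partial>G)"
    by (intro nn_integral_mono nn_integral_fnorm_dens_le)
  finally show ?thesis by (simp add: G.emeasure_space_1)
qed

lemma finite_measure_mix_dens: "finite_measure (density lborel (mix_dens G))"
  using nn_integral_mix_dens_le
  by (intro finite_measureI) (auto simp: emeasure_density top_unique)

end

section \<open>Observed laws under the selection assumption\<close>

lemma pub_prob_borel_extension:
  assumes "pub_prob p"
  obtains q where "q \<in> borel_measurable borel" "\<And>z. 0 \<le> q z \<and> q z \<le> 1"
    "\<And>G. model G p = model G q"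
proof
  show "(\<lambda>z. indicator {0..} z * p z) \<in> borel_measurable borel"
    using assms borel_measurable_restrict_space_iff[of "{0..}" borel p] by (simp add: pub_prob_def)
  show "0 \<le> indicator {0..} z * p z \<and> indicator {0..} z * p z \<le> (1::real)" for z
    using assms by (simp add: pub_prob_def indicator_def)
  have "fnorm_dens mu z * (if d then p z else 1 - p z) =
      fnorm_dens mu z * (if d then indicator {0..} z * p z else 1 - indicator {0..} z * p z)"
    for mu z d
    by (cases "0 \<le> z") (simp_all add: fnorm_dens_neg)
  then show "model G p = model G (\<lambda>z. indicator {0..} z * p z)" for G
    unfolding model_def by presburger
qed

definition absZ_law :: "real measure \<Rightarrow> (real \<Rightarrow> real) \<Rightarrow> bool set \<Rightarrow> real measure" where
  "absZ_law G q E =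
    density lborel (\<lambda>z. ennreal (mix_dens G z * (\<Sum>d\<in>E. if d then q z else 1 - q z)))"

lemma absZ_law_UNIV: "absZ_law G q UNIV = density lborel (mix_dens G)"
  by (simp add: absZ_law_def UNIV_bool)

text \<open>The equations are stated in the shape expected by \<open>cond_law_absZ_model\<close>.\<close>
lemma model_event_eqs:
  "ev_D = {(mu, z, d). z \<in> UNIV \<and> d \<in> {True}}"
  "ev_S_D S = {(mu, z, d). z \<in> S \<and> d \<in> {True}}"
  "ev_S S = {(mu, z, d). z \<in> S \<and> d \<in> UNIV}"
  by (auto simp: ev_D_def ev_S_D_def ev_S_def)

context
  fixes G :: "real measure" and q :: "real \<Rightarrow> real"
  assumes G: "prob_space G" and sets_G [measurable_cong]: "sets G = sets borel"
    and q_borel [measurable]: "q \<in> borel_measurable borel" and q: "\<And>z. 0 \<le> q z \<and> q z \<le> 1"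
begin

interpretation G: prob_space G by (rule G)

declare borel_measurable_mix_dens[OF G sets_G, measurable]

lemma emeasure_model:
  assumes [measurable]: "A \<in> sets borel"
  shows "emeasure (model G q) {(mu, z, d). z \<in> A \<and> d \<in> E} = emeasure (absZ_law G q E) A"
proof -
  define w where "w z d = (if d then q z else 1 - q z)" for z d
  have w_nonneg: "0 \<le> w z d" for z d
    using q[of z] by (simp add: w_def)
  have [measurable]: "(\<lambda>(z, d). w z d) \<in> borel_measurable (lborel \<Otimes>\<^sub>M count_space UNIV)"
    unfolding w_def by measurable
  let ?L = "lborel \<Otimes>\<^sub>M count_space (UNIV :: bool set)"
  interpret GL: pair_sigma_finite G ?L
    by (intro pair_sigma_finite.intro G.sigma_finite_measure_axioms sigma_finite_pair_measure
        lborel.sigma_finite_measure_axioms sigma_finite_measure_count_space_finite) simp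
  let ?X = "{(mu, z, d). z \<in> A \<and> d \<in> E}"
  have "?X = {x \<in> space (G \<Otimes>\<^sub>M ?L). fst (snd x) \<in> A \<and> snd (snd x) \<in> E}"
    by (auto simp: space_pair_measure sets_eq_imp_space_eq[OF sets_G])
  also have "\<dots> \<in> sets (G \<Otimes>\<^sub>M ?L)"
    by measurable
  finally have "emeasure (model G q) ?X =
      (\<integral>\<^sup>+(mu, z, d). ennreal (fnorm_dens mu z * w z d) * indicator A z * indicator E d \<partial>(G \<Otimes>\<^sub>M ?L))"
    unfolding model_def w_def[symmetric]
    by (subst emeasure_density) (auto intro!: nn_integral_cong simp: space_pair_measure split: split_indicator)
  also have "\<dots> = (\<integral>\<^sup>+y. \<integral>\<^sup>+mu. ennreal (fnorm_dens mu (fst y) * w (fst y) (snd y))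
      * indicator A (fst y) * indicator E (snd y) \<partial>G \<partial>?L)"
    by (subst GL.nn_integral_snd[symmetric]) (auto simp: case_prod_beta)
  also have "\<dots> = (\<integral>\<^sup>+(z, d). ennreal (mix_dens G z * w z d) * indicator A z * indicator E d \<partial>?L)"
    by (intro nn_integral_cong)
       (simp add: nn_integral_multc nn_integral_fnorm_dens_mult[OF G sets_G] w_nonneg case_prod_beta)
  also have "\<dots> = (\<integral>\<^sup>+z. (\<Sum>d\<in>UNIV. ennreal (mix_dens G z * w z d) * indicator A z * indicator E d) \<partial>lborel)"
    by (rule nn_integral_pair_count_space_bool) measurable
  also have "\<dots> = (\<integral>\<^sup>+z. ennreal (mix_dens G z * (\<Sum>d\<in>E. w z d)) * indicator A z \<partial>lborel)"
    by (intro nn_integral_cong)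
       (simp add: indicator_def sum.If_cases sum_distrib_left mix_dens_nonneg w_nonneg)
  finally show ?thesis
    by (simp add: absZ_law_def w_def emeasure_density)
qed

lemma emeasure_absZ_law_le:
  shows "emeasure (absZ_law G q E) A \<le> 2"
proof (cases "A \<in> sets borel")
  case True
  have "(\<Sum>d\<in>E. if d then q z else 1 - q z) \<le> (\<Sum>d\<in>UNIV. if d then q z else 1 - q z)" for z
    using q[of z] by (intro sum_mono2) auto
  then have "ennreal (mix_dens G z * (\<Sum>d\<in>E. if d then q z else 1 - q z)) * indicator A z
      \<le> ennreal (mix_dens G z)" for z
    by (auto simp: UNIV_bool mix_dens_nonneg mult_left_le intro!: ennreal_leI split: split_indicator)
  then have "emeasure (absZ_law G q E) A \<le> (\<integral>\<^sup>+z. mix_dens G z \<partial>lborel)"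
    using True by (simp add: absZ_law_def emeasure_density nn_integral_mono)
  also have "\<dots> \<le> 2"
    by (rule nn_integral_mix_dens_le[OF G sets_G])
  finally show ?thesis .
qed (simp add: absZ_law_def emeasure_notin_sets)

lemma finite_measure_absZ_law: "finite_measure (absZ_law G q E)"
  using emeasure_absZ_law_le[of E "space (absZ_law G q E)"]
  by (intro finite_measureI) (auto simp: top_unique)

lemma cond_law_absZ_model:
  assumes "A \<in> sets borel" "B \<in> sets borel"
  shows "cond_law_absZ (model G q) {(mu, z, d). z \<in> B \<and> d \<in> E} A =
    measure (absZ_law G q E) (A \<inter> B) / measure (absZ_law G q E) B"
proof -
  have AB: "A \<inter> B \<in> sets borel"
    using assms by simp
  have eq: "{(mu, z, d). z \<in> A} \<inter> {(mu, z, d). z \<in> B \<and> d \<in> E} =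
      {(mu, z, d). z \<in> A \<inter> B \<and> d \<in> E}"
    by auto
  show ?thesis
    unfolding cond_law_absZ_def eq measure_def emeasure_model[OF AB] emeasure_model[OF assms(2)] by (rule refl)
qed

lemma selection_ok_model_iff:
  assumes S: "S \<in> sets borel"
  shows "selection_ok S (model G q) \<longleftrightarrow>
    0 < measure (absZ_law G q {True}) S \<and> 0 < measure (absZ_law G q UNIV) S \<and>
    (\<forall>A \<in> sets borel. measure (absZ_law G q {True}) (A \<inter> S) / measure (absZ_law G q {True}) S =
      measure (absZ_law G q UNIV) (A \<inter> S) / measure (absZ_law G q UNIV) S)"
proof -
  have "measure (model G q) (ev_S_D S) = measure (absZ_law G q {True}) S"
    "measure (model G q) (ev_S S) = measure (absZ_law G q UNIV) S"
    unfolding model_event_eqs measure_def emeasure_model[OF S] by (rule refl)+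
  moreover have
    "cond_law_absZ (model G q) (ev_S_D S) A =
      measure (absZ_law G q {True}) (A \<inter> S) / measure (absZ_law G q {True}) S"
    "cond_law_absZ (model G q) (ev_S S) A =
      measure (absZ_law G q UNIV) (A \<inter> S) / measure (absZ_law G q UNIV) S"
    if "A \<in> sets borel" for A
    unfolding model_event_eqs cond_law_absZ_model[OF that S] by (rule refl)+
  ultimately show ?thesis
    unfolding selection_ok_def by (simp cong: ball_cong)
qed

lemma cond_law_D_proportional_if_selection_ok:
  assumes S: "S \<in> sets borel" and sel: "selection_ok S (model G q)"
  obtains \<kappa> where "0 < \<kappa>" "\<And>A. A \<in> sets borel \<Longrightarrow>
    cond_law_absZ (model G q) ev_D (A \<inter> S) = \<kappa> * measure (density lborel (mix_dens G)) (A \<inter> S)"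
proof -
  let ?Psi = "measure (absZ_law G q {True})" and ?Phi = "measure (absZ_law G q UNIV)"
  have Psi_S: "0 < ?Psi S" and Phi_S: "0 < ?Phi S"
    and ratio: "\<And>A. A \<in> sets borel \<Longrightarrow> ?Psi (A \<inter> S) / ?Psi S = ?Phi (A \<inter> S) / ?Phi S"
    using sel by (auto simp: selection_ok_model_iff[OF S])
  interpret Psi: finite_measure "absZ_law G q {True}"
    by (rule finite_measure_absZ_law)
  have "?Psi S \<le> ?Psi UNIV"
    using S by (intro Psi.finite_measure_mono) (auto simp: absZ_law_def)
  with Psi_S have Psi_UNIV: "0 < ?Psi UNIV"
    by linarith
  show ?thesis
  proof (rule that)
    show "0 < ?Psi S / (?Phi S * ?Psi UNIV)"
      using Psi_S Phi_S Psi_UNIV by simp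
    fix A :: "real set"
    assume A: "A \<in> sets borel"
    have "cond_law_absZ (model G q) ev_D (A \<inter> S) = ?Psi (A \<inter> S) / ?Psi UNIV"
      using A S unfolding model_event_eqs by (subst cond_law_absZ_model) auto
    also have "\<dots> = ?Psi S / (?Phi S * ?Psi UNIV) * ?Phi (A \<inter> S)"
      using ratio[OF A] Psi_S Phi_S Psi_UNIV by (simp add: field_simps)
    finally show "cond_law_absZ (model G q) ev_D (A \<inter> S) =
        ?Psi S / (?Phi S * ?Psi UNIV) * measure (density lborel (mix_dens G)) (A \<inter> S)"
      by (simp add: absZ_law_UNIV)
  qed
qed

end

lemma mix_dens_proportional_AE_on:
  assumes G: "prob_space G" "sets G = sets borel" and H: "prob_space H" "sets H = sets borel"
    and qG: "qG \<in> borel_measurable borel" "\<And>z. 0 \<le> qG z \<and> qG z \<le> 1"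
    and qH: "qH \<in> borel_measurable borel" "\<And>z. 0 \<le> qH z \<and> qH z \<le> 1"
    and S: "S \<in> sets borel"
    and selG: "selection_ok S (model G qG)" and selH: "selection_ok S (model H qH)"
    and obs: "\<forall>A \<in> sets borel. cond_law_absZ (model G qG) ev_D A = cond_law_absZ (model H qH) ev_D A"
  obtains \<kappa>G \<kappa>H where "0 < \<kappa>G" "0 < \<kappa>H"
    "AE z in lborel. z \<in> S \<longrightarrow> \<kappa>G * mix_dens G z = \<kappa>H * mix_dens H z"
proof -
  note [measurable] = borel_measurable_mix_dens[OF G] borel_measurable_mix_dens[OF H] S
  obtain \<kappa>G where \<kappa>G: "0 < \<kappa>G" "\<And>A. A \<in> sets borel \<Longrightarrow>
      cond_law_absZ (model G qG) ev_D (A \<inter> S) = \<kappa>G * measure (density lborel (mix_dens G)) (A \<inter> S)"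
    using cond_law_D_proportional_if_selection_ok[OF G qG S selG] by blast
  obtain \<kappa>H where \<kappa>H: "0 < \<kappa>H" "\<And>A. A \<in> sets borel \<Longrightarrow>
      cond_law_absZ (model H qH) ev_D (A \<inter> S) = \<kappa>H * measure (density lborel (mix_dens H)) (A \<inter> S)"
    using cond_law_D_proportional_if_selection_ok[OF H qH S selH] by blast
  let ?dens = "\<lambda>\<kappa> K z. ennreal (\<kappa> * mix_dens K z * indicator S z)"
  have restrict: "emeasure (density lborel (?dens \<kappa> K)) A =
      ennreal (\<kappa> * measure (density lborel (mix_dens K)) (A \<inter> S))"
    if K: "prob_space K" "sets K = sets borel" and "0 < \<kappa>" "A \<in> sets borel" for K \<kappa> A
  proof -
    interpret finite_measure "density lborel (mix_dens K)"
      by (rule finite_measure_mix_dens[OF K])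
    show ?thesis
      using that S by (simp add: emeasure_density_scaled_restrict emeasure_eq_measure ennreal_mult)
  qed
  have "density lborel (?dens \<kappa>G G) = density lborel (?dens \<kappa>H H)"
  proof (rule measure_eqI)
    fix A
    assume "A \<in> sets (density lborel (?dens \<kappa>G G))"
    then have A: "A \<in> sets borel"
      by simp
    then show "emeasure (density lborel (?dens \<kappa>G G)) A = emeasure (density lborel (?dens \<kappa>H H)) A"
      using obs S \<kappa>G(2)[OF A] \<kappa>H(2)[OF A] restrict[OF G \<kappa>G(1) A] restrict[OF H \<kappa>H(1) A] by simp
  qed simp
  then have "AE z in lborel. ?dens \<kappa>G G z = ?dens \<kappa>H H z"
    by (subst (asm) sigma_finite_measure.density_unique_iff[OF lborel.sigma_finite_measure_axioms]) auto
  then have "AE z in lborel. z \<in> S \<longrightarrow> \<kappa>G * mix_dens G z = \<kappa>H * mix_dens H z"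
    by eventually_elim (use \<kappa>G(1) \<kappa>H(1) in \<open>auto simp: mix_dens_nonneg\<close>)
  with \<kappa>G(1) \<kappa>H(1) show ?thesis
    by (rule that)
qed

section \<open>The Gaussian-tilted moment generating function\<close>

definition tilted_mgf :: "real measure \<Rightarrow> complex \<Rightarrow> complex" where
  "tilted_mgf G w = (\<integral>mu. of_real (gauss_wt mu) * exp (w * of_real mu) \<partial>G)"

lemma gauss_wt_exp_le:
  assumes "0 \<le> r"
  shows "gauss_wt mu * exp (r * \<bar>mu\<bar>) \<le> exp (r\<^sup>2 / 2)"
proof -
  have "- (mu\<^sup>2) / 2 + r * \<bar>mu\<bar> \<le> r\<^sup>2 / 2"
    using zero_le_power2[of "\<bar>mu\<bar> - r"] by (simp add: power2_eq_square algebra_simps)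
  then show ?thesis
    by (simp add: gauss_wt_def mult_exp_exp)
qed

lemma norm_gauss_wt_exp_le: "norm (of_real (gauss_wt mu) * exp (w * of_real mu)) \<le> exp ((cmod w)\<^sup>2 / 2)"
proof -
  have "Re w * mu \<le> \<bar>Re w\<bar> * \<bar>mu\<bar>"
    using abs_ge_self[of "Re w * mu"] by (simp add: abs_mult)
  also have "\<dots> \<le> cmod w * \<bar>mu\<bar>"
    by (intro mult_right_mono abs_Re_le_cmod) simp
  finally have "norm (of_real (gauss_wt mu) * exp (w * of_real mu)) \<le> gauss_wt mu * exp (cmod w * \<bar>mu\<bar>)"
    using gauss_wt_pos[of mu] by (simp add: norm_mult norm_exp_eq_Re)
  also have "\<dots> \<le> exp ((cmod w)\<^sup>2 / 2)"
    by (rule gauss_wt_exp_le) simp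
  finally show ?thesis .
qed

lemma gauss_wt_exp_series_sums:
  fixes w :: complex
  shows "(\<lambda>n. of_real (gauss_wt mu * mu ^ n / fact n) * w ^ n) sums (of_real (gauss_wt mu) * exp (w * of_real mu))"
  using sums_mult[OF exp_converges[of "w * of_real mu"], of "of_real (gauss_wt mu)"]
  by (simp add: scaleR_conv_of_real power_mult_distrib field_simps)

lemma norm_sum_gauss_wt_exp_series_le:
  assumes "finite I"
  shows "norm (\<Sum>n\<in>I. of_real (gauss_wt mu * mu ^ n / fact n) * w ^ n) \<le> exp ((cmod w)\<^sup>2 / 2)"
proof -
  let ?a = "\<lambda>n. gauss_wt mu * ((cmod w * \<bar>mu\<bar>) ^ n / fact n)"
  have norm_eq: "norm (of_real (gauss_wt mu * mu ^ n / fact n) * w ^ n) = ?a n" for n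
    unfolding norm_mult norm_of_real norm_power
    using gauss_wt_pos[of mu] by (simp add: abs_mult power_abs power_mult_distrib)
  have "?a sums (gauss_wt mu * exp (cmod w * \<bar>mu\<bar>))"
    using exp_converges[of "cmod w * \<bar>mu\<bar>"] by (intro sums_mult) (simp add: divide_inverse_commute)
  then have "sum ?a I \<le> gauss_wt mu * exp (cmod w * \<bar>mu\<bar>)"
    using assms gauss_wt_pos[of mu] by (intro sums_le[OF _ sums_If_finite_set]) auto
  also have "\<dots> \<le> exp ((cmod w)\<^sup>2 / 2)"
    by (rule gauss_wt_exp_le) simp
  finally show ?thesis
    using norm_sum[of "\<lambda>n. of_real (gauss_wt mu * mu ^ n / fact n) * w ^ n" I]
    unfolding norm_eq by linarith
qed

context
  fixes G :: "real measure"
  assumes G: "prob_space G" and sets_G [measurable_cong]: "sets G = sets borel"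
begin

interpretation G: prob_space G by (rule G)

lemma integrable_gauss_wt_exp:
  fixes w :: complex
  shows "integrable G (\<lambda>mu. of_real (gauss_wt mu) * exp (w * of_real mu))"
  by (rule G.integrable_const_bound[where B="exp ((cmod w)\<^sup>2 / 2)"])
     (auto simp: norm_gauss_wt_exp_le)

lemma tilted_mgf_sums:
  "(\<lambda>n. of_real ((\<integral>mu. gauss_wt mu * mu ^ n \<partial>G) / fact n) * w ^ n) sums tilted_mgf G w"
proof -
  define f where "f n mu = of_real (gauss_wt mu * mu ^ n / fact n) * w ^ n" for n mu
  have [measurable]: "f n \<in> borel_measurable borel" for n
    unfolding f_def by measurable
  have f_sums: "(\<lambda>n. f n mu) sums (of_real (gauss_wt mu) * exp (w * of_real mu))" for mu
    unfolding f_def by (rule gauss_wt_exp_series_sums)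
  have bound: "norm (\<Sum>i\<in>I. f i mu) \<le> exp ((cmod w)\<^sup>2 / 2)" if "finite I" for I mu
    unfolding f_def using that by (rule norm_sum_gauss_wt_exp_series_le)
  have integrable_f: "integrable G (f n)" for n
    using bound[of "{n}"] by (intro G.integrable_const_bound[where B="exp ((cmod w)\<^sup>2 / 2)"]) auto
  have "(\<lambda>n. \<integral>mu. (\<Sum>i<n. f i mu) \<partial>G) \<longlonglongrightarrow> tilted_mgf G w"
    unfolding tilted_mgf_def
    by (rule integral_dominated_convergence[where w="\<lambda>_. exp ((cmod w)\<^sup>2 / 2)"])
       (use f_sums bound in \<open>auto simp: sums_def\<close>)
  moreover have "(\<integral>mu. f i mu \<partial>G) = of_real ((\<integral>mu. gauss_wt mu * mu ^ i \<partial>G) / fact i) * w ^ i"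
    for i
    unfolding f_def by (simp only: integral_mult_left_zero integral_complex_of_real integral_divide_zero)
  then have "(\<integral>mu. (\<Sum>i<n. f i mu) \<partial>G) =
      (\<Sum>i<n. of_real ((\<integral>mu. gauss_wt mu * mu ^ i \<partial>G) / fact i) * w ^ i)" for n
    using integrable_f by (simp add: integral_sum)
  ultimately show ?thesis
    by (simp add: sums_def)
qed

lemma tilted_mgf_holomorphic: "tilted_mgf G holomorphic_on UNIV"
proof -
  let ?c = "\<lambda>n. of_real ((\<integral>mu. gauss_wt mu * mu ^ n \<partial>G) / fact n) :: complex"
  have "tilted_mgf G = (\<lambda>w. \<Sum>n. ?c n * w ^ n)"
    using tilted_mgf_sums by (auto simp: fun_eq_iff sums_iff)
  moreover have "((\<lambda>w. \<Sum>n. ?c n * w ^ n) has_field_derivative (\<Sum>n. diffs ?c n * x ^ n)) (at x)" for x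
    using tilted_mgf_sums by (intro termdiffs_strong_converges_everywhere) (rule sums_summable)
  ultimately show ?thesis
    by (auto simp: holomorphic_on_open)
qed

lemma mix_dens_eq_tilted_mgf:
  assumes "0 \<le> z"
  shows "of_real (mix_dens G z) =
    of_real (std_normal_density z) * (tilted_mgf G (of_real z) + tilted_mgf G (- of_real z))"
proof -
  have factor: "(of_real (fnorm_dens mu z) :: complex) = of_real (std_normal_density z) *
      (of_real (gauss_wt mu) * exp (of_real z * of_real mu) +
       of_real (gauss_wt mu) * exp (- of_real z * of_real mu))" for mu
    using assms by (simp add: fnorm_dens_factor distrib_left flip: exp_of_real)
  have "(of_real (mix_dens G z) :: complex) = (\<integral>mu. of_real (std_normal_density z) *
      (of_real (gauss_wt mu) * exp (of_real z * of_real mu) +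
       of_real (gauss_wt mu) * exp (- of_real z * of_real mu)) \<partial>G)"
    unfolding mix_dens_def integral_complex_of_real[symmetric] by (rule Bochner_Integration.integral_cong[OF refl factor])
  also have "\<dots> = of_real (std_normal_density z) * (tilted_mgf G (of_real z) + tilted_mgf G (- of_real z))"
    unfolding tilted_mgf_def
    by (simp only: integral_mult_right_zero
        Bochner_Integration.integral_add[OF integrable_gauss_wt_exp integrable_gauss_wt_exp])
  finally show ?thesis .
qed

end

lemma holomorphic_on_tilted_mgf [holomorphic_intros]:
  assumes G: "prob_space G" "sets G = sets borel" and f: "f holomorphic_on A"
  shows "(\<lambda>w. tilted_mgf G (f w)) holomorphic_on A"
  using holomorphic_on_compose[OF f holomorphic_on_subset[OF tilted_mgf_holomorphic[OF G] subset_UNIV]]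
  by (simp add: o_def)

lemma tilted_mgf_0: "tilted_mgf G 0 = of_real (\<integral>mu. gauss_wt mu \<partial>G)"
  by (simp add: tilted_mgf_def)

lemma tilted_mgf_even_proportional:
  assumes G: "prob_space G" "sets G = sets borel" and H: "prob_space H" "sets H = sets borel"
    and T: "T \<subseteq> {0..}" "\<xi> islimpt T"
    and proportional: "\<And>z. z \<in> T \<Longrightarrow> \<kappa>G * mix_dens G z = \<kappa>H * mix_dens H z"
  shows "of_real \<kappa>G * (tilted_mgf G w + tilted_mgf G (- w)) =
    of_real \<kappa>H * (tilted_mgf H w + tilted_mgf H (- w))"
proof -
  define F where "F w = of_real \<kappa>G * (tilted_mgf G w + tilted_mgf G (- w)) -
    of_real \<kappa>H * (tilted_mgf H w + tilted_mgf H (- w))" for w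
  have holomorphic: "F holomorphic_on UNIV"
    unfolding F_def by (intro holomorphic_intros G H)
  have limpt: "complex_of_real \<xi> islimpt of_real ` T"
    using T(2) by (rule islimpt_isCont_image) (auto simp: eventually_at_filter)
  have zero: "F y = 0" if y: "y \<in> of_real ` T" for y
  proof -
    obtain z where z: "z \<in> T" "y = of_real z"
      using y by blast
    have z0: "0 \<le> z"
      using z(1) T(1) by auto
    have "of_real (std_normal_density z) * F y =
        of_real \<kappa>G * of_real (mix_dens G z) - of_real \<kappa>H * of_real (mix_dens H z)"
      unfolding F_def z(2) mix_dens_eq_tilted_mgf[OF G z0] mix_dens_eq_tilted_mgf[OF H z0]
      by (simp add: algebra_simps)
    also have "\<dots> = 0"
      using proportional[OF z(1)] by (simp flip: of_real_mult)
    finally show "F y = 0"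
      using normal_density_pos[of 1 0 z] by simp
  qed
  have "F w = 0"
    by (rule analytic_continuation[OF holomorphic open_UNIV connected_UNIV subset_UNIV UNIV_I limpt
          zero UNIV_I])
  then show ?thesis
    by (simp add: F_def)
qed

section \<open>Symmetrization, tilting and Levy uniqueness\<close>

definition Symm :: "real measure \<Rightarrow> real measure" where
  "Symm \<nu> = distr (\<nu> \<Otimes>\<^sub>M measure_pmf (bernoulli_pmf (1 / 2))) borel (\<lambda>(x, b). if b then x else - x)"

context
  fixes \<nu> :: "real measure"
  assumes \<nu>: "prob_space \<nu>" and sets_\<nu> [measurable_cong]: "sets \<nu> = sets borel"
begin

interpretation \<nu>: prob_space \<nu> by (rule \<nu>)

interpretation \<nu>B: pair_prob_space \<nu> "measure_pmf (bernoulli_pmf (1 / 2))" ..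

lemma real_distribution_Symm: "real_distribution (Symm \<nu>)"
proof -
  have "prob_space (Symm \<nu>)"
    unfolding Symm_def by (intro \<nu>B.prob_space_distr) measurable
  then show ?thesis
    by (simp add: real_distribution_def real_distribution_axioms_def Symm_def)
qed

lemma char_Symm: "char (Symm \<nu>) t = (\<integral>x. (iexp (t * x) + iexp (- (t * x))) / 2 \<partial>\<nu>)"
proof -
  let ?B = "measure_pmf (bernoulli_pmf (1 / 2))" and ?s = "\<lambda>(x, b). if b then x else - x"
  have "char (Symm \<nu>) t = (\<integral>y. iexp (t * ?s y) \<partial>(\<nu> \<Otimes>\<^sub>M ?B))"
    unfolding char_def Symm_def by (rule integral_distr) measurable
  also have "\<dots> = (\<integral>x. \<integral>b. iexp (t * ?s (x, b)) \<partial>?B \<partial>\<nu>)"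
    by (rule \<nu>B.integral_fst'[symmetric], rule \<nu>B.integrable_const_bound[where B=1])
       (auto simp: norm_exp_eq_Re)
  also have "\<dots> = (\<integral>x. (iexp (t * x) + iexp (- (t * x))) / 2 \<partial>\<nu>)"
    by (simp add: integral_measure_pmf[of UNIV] UNIV_bool scaleR_conv_of_real field_simps)
  finally show ?thesis .
qed

lemma Fold_Symm: "Fold (Symm \<nu>) = Fold \<nu>"
proof -
  let ?B = "measure_pmf (bernoulli_pmf (1 / 2))" and ?s = "\<lambda>(x, b). if b then x else - x"
  have "Fold (Symm \<nu>) = distr (\<nu> \<Otimes>\<^sub>M ?B) borel (abs \<circ> ?s)"
    unfolding Fold_def Symm_def by (rule distr_distr) measurable
  also have "\<dots> = distr (\<nu> \<Otimes>\<^sub>M ?B) borel (abs \<circ> fst)"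
    by (rule distr_cong) auto
  also have "\<dots> = distr (distr (\<nu> \<Otimes>\<^sub>M ?B) \<nu> fst) borel abs"
    by (rule distr_distr[symmetric]) measurable
  also have "distr (\<nu> \<Otimes>\<^sub>M ?B) \<nu> fst = \<nu>"
    by (rule measure_pmf.distr_pair_fst)
  finally show ?thesis
    by (simp add: Fold_def)
qed

end

definition tilt :: "real measure \<Rightarrow> real measure" where
  "tilt G = density G (\<lambda>mu. ennreal (gauss_wt mu / (\<integral>x. gauss_wt x \<partial>G)))"

lemma sets_tilt [simp, measurable_cong]: "sets (tilt G) = sets G"
  by (simp add: tilt_def)

context
  fixes G :: "real measure"
  assumes G: "prob_space G" and sets_G [measurable_cong]: "sets G = sets borel"
begin

interpretation G: prob_space G by (rule G)

lemma integrable_gauss_wt: "integrable G gauss_wt"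
  by (rule G.integrable_const_bound[where B=1]) (auto simp: gauss_wt_def)

lemma integral_gauss_wt_pos: "0 < (\<integral>mu. gauss_wt mu \<partial>G)"
  using G.integral_less_AE_space[of "\<lambda>_. 0" gauss_wt] integrable_gauss_wt gauss_wt_pos
  by (simp add: G.emeasure_space_1)

lemma prob_space_tilt: "prob_space (tilt G)"
proof (rule prob_spaceI)
  have "emeasure (tilt G) (space (tilt G)) = (\<integral>\<^sup>+mu. gauss_wt mu / (\<integral>x. gauss_wt x \<partial>G) \<partial>G)"
    by (simp add: tilt_def emeasure_density nn_integral_density)
  also have "\<dots> = 1"
    using integrable_gauss_wt integral_gauss_wt_pos gauss_wt_pos
    by (subst nn_integral_eq_integral) (auto simp: less_imp_le)
  finally show "emeasure (tilt G) (space (tilt G)) = 1" .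
qed

lemma char_Symm_tilt:
  "char (Symm (tilt G)) t =
    (tilted_mgf G (\<i> * of_real t) + tilted_mgf G (- (\<i> * of_real t))) / of_real (2 * (\<integral>x. gauss_wt x \<partial>G))"
proof -
  let ?m = "\<integral>x. gauss_wt x \<partial>G"
  let ?e = "\<lambda>w mu. of_real (gauss_wt mu) * exp (w * of_real mu) :: complex"
  have sets_tilt_borel: "sets (tilt G) = sets borel"
    by (simp add: sets_G)
  have "char (Symm (tilt G)) t =
      (\<integral>mu. (gauss_wt mu / ?m) *\<^sub>R ((iexp (t * mu) + iexp (- (t * mu))) / 2) \<partial>G)"
    unfolding char_Symm[OF prob_space_tilt sets_tilt_borel] unfolding tilt_def
    using integral_gauss_wt_pos gauss_wt_pos by (subst integral_density) (auto simp: less_imp_le)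
  also have "\<dots> = (\<integral>mu. (?e (\<i> * of_real t) mu + ?e (- (\<i> * of_real t)) mu) / of_real (2 * ?m) \<partial>G)"
    by (intro Bochner_Integration.integral_cong) (simp_all add: scaleR_conv_of_real field_simps)
  also have "\<dots> = (tilted_mgf G (\<i> * of_real t) + tilted_mgf G (- (\<i> * of_real t))) / of_real (2 * ?m)"
    unfolding tilted_mgf_def
    by (simp only: integral_divide_zero
        Bochner_Integration.integral_add[OF integrable_gauss_wt_exp[OF G sets_G]
          integrable_gauss_wt_exp[OF G sets_G]])
  finally show ?thesis .
qed

lemma Fold_tilt: "Fold (tilt G) = density (Fold G) (\<lambda>y. ennreal (gauss_wt y / (\<integral>x. gauss_wt x \<partial>G)))"
  unfolding Fold_def tilt_def by (subst density_distr) (auto simp: gauss_wt_def)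

end

lemma Fold_eq_if_Fold_tilt_eq:
  assumes G: "prob_space G" "sets G = sets borel" and H: "prob_space H" "sets H = sets borel"
    and "Fold (tilt G) = Fold (tilt H)"
  shows "Fold G = Fold H"
proof -
  define mG mH where "mG = (\<integral>x. gauss_wt x \<partial>G)" and "mH = (\<integral>x. gauss_wt x \<partial>H)"
  have mG: "0 < mG" and mH: "0 < mH"
    unfolding mG_def mH_def by (rule integral_gauss_wt_pos[OF G], rule integral_gauss_wt_pos[OF H])
  have tilted: "density (Fold G) (\<lambda>y. ennreal (gauss_wt y / mG)) =
      density (Fold H) (\<lambda>y. ennreal (gauss_wt y / mH))"
    using assms(5) by (simp add: Fold_tilt[OF G] Fold_tilt[OF H] mG_def mH_def)
  have [measurable_cong]: "sets (Fold K) = sets borel" for K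
    by (simp add: Fold_def)
  have "Fold G = density (density (Fold G) (\<lambda>y. ennreal (gauss_wt y / mG)))
      (\<lambda>y. ennreal (1 / (gauss_wt y / mG)))"
    by (rule density_density_inverse[symmetric]) (use mG gauss_wt_pos in auto)
  also have "\<dots> = density (Fold H) (\<lambda>y. ennreal (gauss_wt y / mH) * ennreal (1 / (gauss_wt y / mG)))"
    unfolding tilted by (rule density_density_eq) measurable
  also have "\<dots> = density (Fold H) (\<lambda>_. ennreal (mG / mH))"
    using mG mH by (simp add: gauss_wt_def less_imp_le field_simps flip: ennreal_mult)
  finally have scaled: "Fold G = density (Fold H) (\<lambda>_. ennreal (mG / mH))" .
  interpret FG: prob_space "Fold G"
    unfolding Fold_def using G by (intro prob_space.prob_space_distr) auto
  interpret FH: prob_space "Fold H"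
    unfolding Fold_def using H by (intro prob_space.prob_space_distr) auto
  have "1 = emeasure (Fold G) (space (Fold H))"
    using FG.emeasure_space_1 by (simp add: Fold_def)
  also have "\<dots> = ennreal (mG / mH)"
    by (subst scaled) (simp add: emeasure_density_const FH.emeasure_space_1)
  finally have "mG / mH = 1"
    using mG mH by simp
  then show ?thesis
    using scaled by (simp add: density_1)
qed

lemma Fold_eq_if_tilted_mgf_even_proportional:
  assumes G: "prob_space G" "sets G = sets borel" and H: "prob_space H" "sets H = sets borel"
    and "0 < \<kappa>G" "0 < \<kappa>H"
    and proportional: "\<And>w. of_real \<kappa>G * (tilted_mgf G w + tilted_mgf G (- w)) =
      of_real \<kappa>H * (tilted_mgf H w + tilted_mgf H (- w))"
  shows "Fold G = Fold H"
proof -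
  define mG mH where "mG = (\<integral>x. gauss_wt x \<partial>G)" and "mH = (\<integral>x. gauss_wt x \<partial>H)"
  have "of_real (\<kappa>G * mG) = (of_real (\<kappa>H * mH) :: complex)"
    using proportional[of 0] by (simp add: tilted_mgf_0 mG_def mH_def)
  then have masses: "\<kappa>G * mG = \<kappa>H * mH"
    by (simp only: of_real_eq_iff)
  have "char (Symm (tilt G)) t = char (Symm (tilt H)) t" for t
  proof -
    let ?X = "\<lambda>K. tilted_mgf K (\<i> * of_real t) + tilted_mgf K (- (\<i> * of_real t))"
    have "char (Symm (tilt G)) t = of_real \<kappa>G * ?X G / of_real (2 * (\<kappa>G * mG))"
      using \<open>0 < \<kappa>G\<close> by (simp add: char_Symm_tilt[OF G] mG_def)
    also have "\<dots> = of_real \<kappa>H * ?X H / of_real (2 * (\<kappa>H * mH))"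
      by (simp only: proportional masses)
    also have "\<dots> = char (Symm (tilt H)) t"
      using \<open>0 < \<kappa>H\<close> by (simp add: char_Symm_tilt[OF H] mH_def)
    finally show ?thesis .
  qed
  then have "Symm (tilt G) = Symm (tilt H)"
    using G H by (intro Levy_uniqueness real_distribution_Symm prob_space_tilt ext) auto
  then have "Fold (tilt G) = Fold (tilt H)"
    using G H by (metis Fold_Symm prob_space_tilt sets_tilt)
  then show ?thesis
    by (rule Fold_eq_if_Fold_tilt_eq[OF G H])
qed

theorem theorem1:
  fixes S :: "real set" and G H :: "real measure" and p p' :: "real \<Rightarrow> real"
  assumes "S \<in> sets borel" and "S \<subseteq> {0..}" and "emeasure lborel S > 0"
    and "prob_space G" and "sets G = sets borel"
    and "prob_space H" and "sets H = sets borel"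
    and "pub_prob p" and "pub_prob p'"
    and "selection_ok S (model G p)" and "selection_ok S (model H p')"
    and "\<forall>A \<in> sets borel. cond_law_absZ (model G p) ev_D A = cond_law_absZ (model H p') ev_D A"
  shows "Fold G = Fold H"
proof -
  note G = assms(4,5) and H = assms(6,7)
  obtain q where q: "q \<in> borel_measurable borel" "\<And>z. 0 \<le> q z \<and> q z \<le> 1"
    and model_q: "\<And>K. model K p = model K q"
    using pub_prob_borel_extension[OF assms(8)] by blast
  obtain q' where q': "q' \<in> borel_measurable borel" "\<And>z. 0 \<le> q' z \<and> q' z \<le> 1"
    and model_q': "\<And>K. model K p' = model K q'"
    using pub_prob_borel_extension[OF assms(9)] by blast
  obtain \<kappa>G \<kappa>H where \<kappa>: "0 < \<kappa>G" "0 < \<kappa>H"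
    and ae: "AE z in lborel. z \<in> S \<longrightarrow> \<kappa>G * mix_dens G z = \<kappa>H * mix_dens H z"
    using mix_dens_proportional_AE_on[OF G H q q' assms(1)] assms(10-12)
    unfolding model_q model_q' by blast
  obtain T \<xi> where T: "T \<subseteq> S" "\<And>z. z \<in> T \<Longrightarrow> \<kappa>G * mix_dens G z = \<kappa>H * mix_dens H z"
    and "\<xi> islimpt T"
    using AE_on_set_obtain_islimpt[OF assms(1,3) ae] by blast
  then have "of_real \<kappa>G * (tilted_mgf G w + tilted_mgf G (- w)) =
      of_real \<kappa>H * (tilted_mgf H w + tilted_mgf H (- w))" for w
    using assms(2) by (intro tilted_mgf_even_proportional[OF G H]) auto
  then show ?thesis
    by (rule Fold_eq_if_tilted_mgf_even_proportional[OF G H \<kappa>])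
qed

end
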